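(* Let $n\ge 1$, let $t_1,\dots,t_{n+1}$ be real nodes in strictly increasing order (or in strictly decreasing order), and let $d_1,\dots,d_{n+1}$ be given real values having alternating signs. Define $$d_{i,0}:=d_i,\quad i=1,\dots,n+1,\qquad d_{i,k}:=\frac{d_{i+1,k-1}-d_{i,k-1}}{t_{i+k}-t_i},\quad k=1,\dots,n,\; i=1,\dots,n+1-k.$$ Then all the values $d_{i,k}$ can be computed to high relative accuracy by this recursion.
   Context: A real quantity is said to be computed to high relative accuracy (HRA) in a floating-point arithmetic with unit roundoff $u$ if the relative error of the computed value is bounded by $Cu$, where $C>0$ is a constant independent of the arithmetic precision. An algorithm satisfies the non-inaccurate-cancellation (NIC) condition (which suffices for HRA) if it only evaluates products, quotients, sums of numbers of the same sign, subtractions of numbers of opposite sign, and subtractions of initial data. The initial data here are the nodes $t_i$ and the values $d_i$. *)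

theory Defs
  imports Complex_Main
begin

fun dd :: "(nat \<Rightarrow> real) \<Rightarrow> (nat \<Rightarrow> real) \<Rightarrow> nat \<Rightarrow> nat \<Rightarrow> real" where
  "dd t d i 0 = d i"
| "dd t d i (Suc k) = (dd t d (i+1) k - dd t d i k) / (t (i + Suc k) - t i)"

text \<open>Values computed by the same recursion in floating-point arithmetic,
  standard model: every elementary operation op on the (already computed)
  operands returns (a op b)(1+e) with |e| <= u.  The initial data t_i, d_i are
  exact.  es = error of the subtraction in the numerator, et = error of the
  subtraction of nodes t_{i+k} - t_i, eq = error of the quotient.\<close>
fun dd_fl :: "(nat \<Rightarrow> real) \<Rightarrow> (nat \<Rightarrow> real) \<Rightarrow> (nat \<Rightarrow> nat \<Rightarrow> real) \<Rightarrow>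
    (nat \<Rightarrow> nat \<Rightarrow> real) \<Rightarrow> (nat \<Rightarrow> nat \<Rightarrow> real) \<Rightarrow> nat \<Rightarrow> nat \<Rightarrow> real" where
  "dd_fl t d es et eq i 0 = d i"
| "dd_fl t d es et eq i (Suc k) =
     (((dd_fl t d es et eq (i+1) k - dd_fl t d es et eq i k) * (1 + es i (Suc k)))
      / ((t (i + Suc k) - t i) * (1 + et i (Suc k)))) * (1 + eq i (Suc k))"

end

theory Submission
  imports Defs
begin

(* By induction on k, every column d_{.,k} of the table alternates in sign: its numerators
   d_{i+1,k-1} - d_{i,k-1} are differences of numbers of opposite sign, hence alternate
   themselves, and all denominators t_{i+k} - t_i have the same sign since the nodes are
   monotone.  So apart from t_{i+k} - t_i, which subtracts initial data, every subtraction
   is one of numbers of opposite sign, and such a subtraction does not amplify relative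
   errors because |x - y| = |x| + |y|.  Each step adds three rounding factors, so the
   relative error a_k of column k obeys a_{k+1} <= 2 a_k + 12 u, whence
   a_k <= 12 (2^k - 1) u as long as 12 * 2^n * u <= 1. *)

lemma increasing_nodes_less:
  fixes t :: "nat \<Rightarrow> real"
  assumes "\<forall>i\<in>{1..n}. t i < t (i+1)" "1 \<le> i" "i < j" "j \<le> n + 1"
  shows "t i < t j"
  using assms(3,4)
proof (induction j)
  case (Suc j)
  then show ?case
    using assms(1,2) by (cases "i = j") (auto intro: less_trans[of _ "t j"])
qed simp

lemma node_gaps_same_sign:
  fixes t :: "nat \<Rightarrow> real"
  assumes "(\<forall>i\<in>{1..n}. t i < t (i+1)) \<or> (\<forall>i\<in>{1..n}. t i > t (i+1))"
    and "1 \<le> i" "i < j" "j \<le> n + 1" "1 \<le> i'" "i' < j'" "j' \<le> n + 1"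
  shows "0 < (t j - t i) * (t j' - t i')"
  using assms(1)
proof
  assume "\<forall>i\<in>{1..n}. t i < t (i+1)"
  then have "t i < t j" "t i' < t j'"
    using increasing_nodes_less assms(2-) by blast+
  then show ?thesis by simp
next
  assume "\<forall>i\<in>{1..n}. t i > t (i+1)"
  then have "\<forall>i\<in>{1..n}. - t i < - t (i+1)" by simp
  then have "- t i < - t j" "- t i' < - t j'"
    using increasing_nodes_less[of n "\<lambda>i. - t i"] assms(2-) by blast+
  then show ?thesis by (simp add: mult_neg_neg)
qed

lemma alternating_diffs_mult_neg:
  fixes a b c :: real
  assumes "a * b < 0" "b * c < 0"
  shows "(b - a) * (c - b) < 0"
  using assms by (auto simp: mult_less_0_iff)

lemma dd_alternating:
  fixes t d :: "nat \<Rightarrow> real"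
  assumes nodes: "(\<forall>i\<in>{1..n}. t i < t (i+1)) \<or> (\<forall>i\<in>{1..n}. t i > t (i+1))"
    and alternating: "\<forall>i\<in>{1..n}. d i * d (i+1) < 0"
  shows "1 \<le> i \<Longrightarrow> i + k \<le> n \<Longrightarrow> dd t d i k * dd t d (i+1) k < 0"
proof (induction k arbitrary: i)
  case 0
  then show ?case using alternating by simp
next
  case (Suc k)
  have "dd t d i k * dd t d (i+1) k < 0" "dd t d (i+1) k * dd t d (i+2) k < 0"
    using Suc.IH[of i] Suc.IH[of "i+1"] Suc.prems by simp_all
  then have numerators: "(dd t d (i+1) k - dd t d i k) * (dd t d (i+2) k - dd t d (i+1) k) < 0"
    by (rule alternating_diffs_mult_neg)
  have denominators: "0 < (t (i + Suc k) - t i) * (t (i + 2 + k) - t (i+1))"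
    using node_gaps_same_sign[OF nodes] Suc.prems by simp
  have "dd t d i (Suc k) * dd t d (i+1) (Suc k)
      = (dd t d (i+1) k - dd t d i k) * (dd t d (i+2) k - dd t d (i+1) k)
        / ((t (i + Suc k) - t i) * (t (i + 2 + k) - t (i+1)))"
    by (simp add: ac_simps)
  with numerators denominators show ?case by (simp add: divide_neg_pos)
qed

lemma abs_mult_minus_one_le:
  fixes x y a b :: real
  assumes "\<bar>x - 1\<bar> \<le> a" "\<bar>y - 1\<bar> \<le> b"
  shows "\<bar>x * y - 1\<bar> \<le> a + b + a * b"
proof -
  have "x * y - 1 = (x - 1) + (y - 1) + (x - 1) * (y - 1)" by algebra
  moreover have "\<bar>(x - 1) * (y - 1)\<bar> \<le> a * b"
    unfolding abs_mult using assms by (intro mult_mono) auto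
  ultimately show ?thesis using assms by linarith
qed

lemma abs_divide_one_plus_minus_one_le:
  fixes x r a :: real
  assumes "\<bar>x - 1\<bar> \<le> a" "\<bar>r\<bar> \<le> 1/2"
  shows "\<bar>x / (1 + r) - 1\<bar> \<le> 2 * (a + \<bar>r\<bar>)"
proof -
  have r: "1/2 \<le> 1 + r" using assms(2) by linarith
  have "\<bar>x / (1 + r) - 1\<bar> = \<bar>x - 1 - r\<bar> / (1 + r)"
    using r by (simp add: field_simps)
  also have "\<dots> \<le> \<bar>x - 1 - r\<bar> / (1/2)"
    using r by (intro divide_left_mono) auto
  also have "\<dots> \<le> 2 * (a + \<bar>r\<bar>)"
    using assms(1) abs_triangle_ineq4[of "x - 1" r] by simp
  finally show ?thesis .
qed

lemma rounding_factor_bound: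
  fixes c p q r b u :: real
  assumes "\<bar>c\<bar> \<le> b" "b \<le> 1" "\<bar>p\<bar> \<le> u" "\<bar>q\<bar> \<le> u" "\<bar>r\<bar> \<le> u" "u \<le> 1/2"
  shows "\<bar>(1 + c) * (1 + p) * (1 + q) / (1 + r) - 1\<bar> \<le> 2 * b + 12 * u"
proof -
  have "0 \<le> u" using assms(3) by linarith
  have "\<bar>(1 + c) * (1 + p) - 1\<bar> \<le> b + u + b * u"
    using assms by (intro abs_mult_minus_one_le) auto
  moreover have "b * u \<le> u"
    using assms(2) \<open>0 \<le> u\<close> mult_right_mono[of b 1 u] by simp
  ultimately have cp: "\<bar>(1 + c) * (1 + p) - 1\<bar> \<le> b + 2 * u" by linarith
  have "\<bar>(1 + c) * (1 + p) * (1 + q) - 1\<bar> \<le> (b + 2 * u) + u + (b + 2 * u) * u"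
    using cp assms by (intro abs_mult_minus_one_le) auto
  moreover have "(b + 2 * u) * u \<le> 2 * u"
    using assms(2,6) \<open>0 \<le> u\<close> mult_right_mono[of "b + 2 * u" 2 u] by simp
  ultimately have "\<bar>(1 + c) * (1 + p) * (1 + q) - 1\<bar> \<le> b + 5 * u" by linarith
  hence "\<bar>(1 + c) * (1 + p) * (1 + q) / (1 + r) - 1\<bar> \<le> 2 * (b + 5 * u + \<bar>r\<bar>)"
    using assms by (intro abs_divide_one_plus_minus_one_le) auto
  also have "\<dots> \<le> 2 * b + 12 * u"
    using assms(5) by simp
  finally show ?thesis .
qed

lemma abs_diff_rel_error_opposite_signs:
  fixes x y xh yh a :: real
  assumes "x * y < 0" "\<bar>xh - x\<bar> \<le> a * \<bar>x\<bar>" "\<bar>yh - y\<bar> \<le> a * \<bar>y\<bar>"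
  shows "\<bar>(xh - yh) - (x - y)\<bar> \<le> a * \<bar>x - y\<bar>"
proof -
  have "\<bar>x - y\<bar> = \<bar>x\<bar> + \<bar>y\<bar>"
    using assms(1) by (auto simp: mult_less_0_iff)
  moreover have "\<bar>(xh - yh) - (x - y)\<bar> \<le> \<bar>xh - x\<bar> + \<bar>yh - y\<bar>" by linarith
  ultimately show ?thesis using assms(2,3) by (simp add: distrib_left)
qed

lemma divided_difference_step_error:
  fixes x y xh yh T a u p q r :: real
  assumes "x * y < 0" "\<bar>xh - x\<bar> \<le> a * \<bar>x\<bar>" "\<bar>yh - y\<bar> \<le> a * \<bar>y\<bar>" "a \<le> 1"
    and "\<bar>p\<bar> \<le> u" "\<bar>q\<bar> \<le> u" "\<bar>r\<bar> \<le> u" "u \<le> 1/2" "T \<noteq> 0"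
  shows "\<bar>(xh - yh) * (1 + p) / (T * (1 + r)) * (1 + q) - (x - y) / T\<bar>
           \<le> (2 * a + 12 * u) * \<bar>(x - y) / T\<bar>"
proof -
  have "x - y \<noteq> 0" using assms(1) by auto
  define c where "c = ((xh - yh) - (x - y)) / (x - y)"
  have c: "\<bar>c\<bar> \<le> a"
    using abs_diff_rel_error_opposite_signs[OF assms(1-3)] \<open>x - y \<noteq> 0\<close>
    by (simp add: c_def abs_divide divide_le_eq)
  have "xh - yh = (x - y) * (1 + c)"
    using \<open>x - y \<noteq> 0\<close> by (simp add: c_def field_simps)
  define F where "F = (1 + c) * (1 + p) * (1 + q) / (1 + r)"
  have "1 + r \<noteq> 0" using assms(7,8) by linarith
  hence "(xh - yh) * (1 + p) / (T * (1 + r)) * (1 + q) = (x - y) / T * F"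
    unfolding \<open>xh - yh = (x - y) * (1 + c)\<close> F_def using assms(9) by (simp add: field_simps)
  hence "(xh - yh) * (1 + p) / (T * (1 + r)) * (1 + q) - (x - y) / T = (x - y) / T * (F - 1)"
    by (simp add: right_diff_distrib)
  hence "\<bar>(xh - yh) * (1 + p) / (T * (1 + r)) * (1 + q) - (x - y) / T\<bar> = \<bar>(x - y) / T\<bar> * \<bar>F - 1\<bar>"
    by (simp only: abs_mult)
  also have "\<dots> \<le> \<bar>(x - y) / T\<bar> * (2 * a + 12 * u)"
    unfolding F_def using c assms by (intro mult_left_mono rounding_factor_bound) auto
  finally show ?thesis by (simp add: mult.commute)
qed

lemma error_bound_mono:
  fixes u :: real
  assumes "k \<le> n" "0 \<le> u"
  shows "12 * (2^k - 1) * u \<le> 12 * 2^n * u"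
proof -
  have "(2::real)^k \<le> 2^n" using assms(1) by (rule power_increasing) simp
  then have "12 * (2^k - 1) \<le> (12 * 2^n :: real)" by (simp del: power_increasing_iff)
  then show ?thesis using assms(2) by (rule mult_right_mono)
qed

lemma dd_fl_rel_error:
  fixes t d :: "nat \<Rightarrow> real"
  assumes nodes: "(\<forall>i\<in>{1..n}. t i < t (i+1)) \<or> (\<forall>i\<in>{1..n}. t i > t (i+1))"
    and alternating: "\<forall>i\<in>{1..n}. d i * d (i+1) < 0"
    and small: "12 * 2^n * u \<le> 1"
    and rounding: "\<forall>i k. \<bar>es i k\<bar> \<le> u \<and> \<bar>et i k\<bar> \<le> u \<and> \<bar>eq i k\<bar> \<le> u"
  shows "1 \<le> i \<Longrightarrow> i + k \<le> n + 1 \<Longrightarrow>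
    \<bar>dd_fl t d es et eq i k - dd t d i k\<bar> \<le> 12 * (2^k - 1) * u * \<bar>dd t d i k\<bar>"
proof (induction k arbitrary: i)
  case 0
  then show ?case by simp
next
  case (Suc k)
  have "0 \<le> u" using rounding by (meson abs_ge_zero order_trans)
  have "12 * u \<le> 12 * 2^n * u"
    using \<open>0 \<le> u\<close> by (intro mult_right_mono) auto
  with small have "u \<le> 1/2" by linarith
  have "12 * (2^k - 1) * u \<le> 12 * 2^n * u"
    using Suc.prems \<open>0 \<le> u\<close> by (intro error_bound_mono) simp_all
  with small have "12 * (2^k - 1) * u \<le> 1" by linarith
  have "0 < (t (i + Suc k) - t i) * (t (i + Suc k) - t i)"
    using node_gaps_same_sign[OF nodes] Suc.prems by simp
  then have "t (i + Suc k) - t i \<noteq> 0" by auto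
  have "dd t d (i+1) k * dd t d i k < 0"
    using dd_alternating[OF nodes alternating, of i k] Suc.prems by (simp add: mult.commute)
  from divided_difference_step_error[OF this
      Suc.IH[of "i+1"] Suc.IH[of i] \<open>12 * (2^k - 1) * u \<le> 1\<close> _ _ _ \<open>u \<le> 1/2\<close>
      \<open>t (i + Suc k) - t i \<noteq> 0\<close>]
  have "\<bar>dd_fl t d es et eq i (Suc k) - dd t d i (Suc k)\<bar>
      \<le> (2 * (12 * (2^k - 1) * u) + 12 * u) * \<bar>dd t d i (Suc k)\<bar>"
    using Suc.prems rounding by simp
  then show ?case by (simp add: algebra_simps)
qed

theorem theorem1:
  fixes n :: nat
  assumes "n \<ge> 1"
  shows "\<exists>C>0. \<exists>u0>0. \<forall>(t :: nat \<Rightarrow> real) (d :: nat \<Rightarrow> real) u es et eq.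
     ((\<forall>i\<in>{1..n}. t i < t (i+1)) \<or> (\<forall>i\<in>{1..n}. t i > t (i+1))) \<longrightarrow>
     (\<forall>i\<in>{1..n}. d i * d (i+1) < 0) \<longrightarrow>
     0 < u \<longrightarrow> u \<le> u0 \<longrightarrow>
     (\<forall>i k. \<bar>es i k\<bar> \<le> u \<and> \<bar>et i k\<bar> \<le> u \<and> \<bar>eq i k\<bar> \<le> u) \<longrightarrow>
     (\<forall>k\<in>{0..n}. \<forall>i\<in>{1..n+1-k}.
        \<bar>dd_fl t d es et eq i k - dd t d i k\<bar> \<le> C * u * \<bar>dd t d i k\<bar>)"
proof (rule exI[of _ "12 * 2^n"], intro conjI exI[of _ "1 / (12 * 2^n)"] allI impI ballI)
  fix t d :: "nat \<Rightarrow> real" and u :: real and es et eq :: "nat \<Rightarrow> nat \<Rightarrow> real" and k i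
  assume nodes: "(\<forall>i\<in>{1..n}. t i < t (i+1)) \<or> (\<forall>i\<in>{1..n}. t i > t (i+1))"
    and alternating: "\<forall>i\<in>{1..n}. d i * d (i+1) < 0"
    and "0 < u" "u \<le> 1 / (12 * 2^n)"
    and rounding: "\<forall>i k. \<bar>es i k\<bar> \<le> u \<and> \<bar>et i k\<bar> \<le> u \<and> \<bar>eq i k\<bar> \<le> u"
    and "k \<in> {0..n}" "i \<in> {1..n+1-k}"
  then have "12 * 2^n * u \<le> 1" by (simp add: field_simps)
  have "1 \<le> i" "i + k \<le> n + 1"
    using \<open>k \<in> {0..n}\<close> \<open>i \<in> {1..n+1-k}\<close> by auto
  then have "\<bar>dd_fl t d es et eq i k - dd t d i k\<bar> \<le> 12 * (2^k - 1) * u * \<bar>dd t d i k\<bar>"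
    by (rule dd_fl_rel_error[OF nodes alternating \<open>12 * 2^n * u \<le> 1\<close> rounding])
  also have "\<dots> \<le> 12 * 2^n * u * \<bar>dd t d i k\<bar>"
    using \<open>0 < u\<close> \<open>k \<in> {0..n}\<close> by (intro mult_right_mono error_bound_mono) simp_all
  finally show "\<bar>dd_fl t d es et eq i k - dd t d i k\<bar> \<le> 12 * 2^n * u * \<bar>dd t d i k\<bar>" .
qed auto

end
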